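(* Let $X$ be a connected, oriented surface, let $f\colon X\to X$ be an orientation-preserving homeomorphism, let $p\in X\setminus\partial X$ be a direct saddle fixed point of $f$, let $D\subset X$ be a closed 2-cell whose boundary is a simple homoclinic loop $\Lambda=J_s\cup J_u$ at $p$ ($J_s\subset W_s(p)$, $J_u\subset W_u(p)$ arcs with common endpoints $p$ and a homoclinic point $p'$), and let $V=D\setminus\partial D$. Let $r\colon f(D)\cup D\to D$ be a retraction with $r(f(D)\setminus D)\subset J_s$. Let $n\ge1$. Then for every $q\in\mathrm{Fix}(f^n)\cap V_n$ there is a neighborhood $U\subset V_n$ of $q$ such that $f^n|_U=(r\circ f)^n|_U$.
   Context: A fixed point $p\notin\partial X$ is a direct saddle if there is a chart sending $p$ to $0\in\mathbb{R}^2$ in which $f$ is locally represented by $(x,y)\mapsto(\mu x,\lambda y)$ with $\mu>1>\lambda>0$. The stable curve $W_s(p)$ is the connected component containing $p$ of the set of $x\in X$ for which there is a sequence $(x_k)_{k\ge0}$ with $x_0=x$, $f(x_k)=x_{k+1}$, $x_k\to p$; $W_u(p)$ is the stable curve of $p$ for $f^{-1}$. A homoclinic point is $p'\in(W_s(p)\cap W_u(p))\setminus\{p\}$; the loop is simple if $J_s\cap J_u=\{p,p'\}$. A retraction of $Y$ onto $Y_0\subset Y$ is a continuous map $Y\to Y_0$ fixing each point of $Y_0$. For $n\ge1$, $V_n=\{x\in V: f^i(x)\in V \text{ for } i=1,\dots,n-1\}$. *)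

theory Defs
  imports "HOL-Complex_Analysis.Complex_Analysis"
begin

definition half_plane :: "complex set" where
  "half_plane = {z. 0 \<le> Im z}"

definition hp_chart :: "'a topology \<Rightarrow> ('a \<Rightarrow> complex) \<Rightarrow> 'a set \<Rightarrow> bool" where
  "hp_chart X \<phi> W \<longleftrightarrow> openin X W \<and> \<phi> ` W \<subseteq> half_plane \<and>
     openin (top_of_set half_plane) (\<phi> ` W) \<and>
     homeomorphic_map (subtopology X W) (top_of_set (\<phi> ` W)) \<phi>"

definition plane_chart :: "'a topology \<Rightarrow> ('a \<Rightarrow> complex) \<Rightarrow> 'a set \<Rightarrow> bool" where
  "plane_chart X \<phi> W \<longleftrightarrow> openin X W \<and> open (\<phi> ` W) \<and>
     homeomorphic_map (subtopology X W) (top_of_set (\<phi> ` W)) \<phi>"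

definition surface :: "'a topology \<Rightarrow> bool" where
  "surface X \<longleftrightarrow> Hausdorff_space X \<and> second_countable X \<and>
     (\<forall>x\<in>topspace X. \<exists>\<phi> W. hp_chart X \<phi> W \<and> x \<in> W)"

text \<open>Boundary of a surface: points sent to the boundary line of the half-plane by
  a chart (well defined by invariance of domain).\<close>
definition surface_boundary :: "'a topology \<Rightarrow> 'a set" where
  "surface_boundary X = {x. \<exists>\<phi> W. hp_chart X \<phi> W \<and> x \<in> W \<and> Im (\<phi> x) = 0}"

definition orient_pres :: "complex set \<Rightarrow> (complex \<Rightarrow> complex) \<Rightarrow> bool" where
  "orient_pres S h \<longleftrightarrow> (\<forall>z\<in>S. 0 < Im z \<longrightarrow>
     (\<forall>\<^sub>F r in at_right 0. winding_number (h \<circ> circlepath z r) (h z) = 1))"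

definition orient_pres_wrt :: "'a topology \<Rightarrow> (('a \<Rightarrow> complex) \<times> 'a set) set \<Rightarrow> ('a \<Rightarrow> 'a) \<Rightarrow> bool" where
  "orient_pres_wrt X A g \<longleftrightarrow> (\<forall>(\<phi>, W)\<in>A. \<forall>(\<psi>, W')\<in>A.
     orient_pres (\<phi> ` {x \<in> W. g x \<in> W'}) (\<psi> \<circ> g \<circ> inv_into W \<phi>))"

text \<open>An orientation of X: an atlas covering X whose transition maps are
  orientation-preserving.  An oriented surface is a surface with such an atlas.\<close>
definition oriented_atlas :: "'a topology \<Rightarrow> (('a \<Rightarrow> complex) \<times> 'a set) set \<Rightarrow> bool" where
  "oriented_atlas X A \<longleftrightarrow> (\<forall>(\<phi>, W)\<in>A. hp_chart X \<phi> W) \<and>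
     (\<forall>x\<in>topspace X. \<exists>(\<phi>, W)\<in>A. x \<in> W) \<and> orient_pres_wrt X A id"

definition direct_saddle :: "'a topology \<Rightarrow> ('a \<Rightarrow> 'a) \<Rightarrow> 'a \<Rightarrow> bool" where
  "direct_saddle X f p \<longleftrightarrow> p \<in> topspace X \<and> p \<notin> surface_boundary X \<and> f p = p \<and>
     (\<exists>\<phi> W N mu lam. plane_chart X \<phi> W \<and> p \<in> W \<and> \<phi> p = 0 \<and>
        openin X N \<and> p \<in> N \<and> N \<subseteq> W \<and> mu > 1 \<and> 1 > lam \<and> lam > 0 \<and>
        (\<forall>x\<in>N. f x \<in> W \<and> \<phi> (f x) = Complex (mu * Re (\<phi> x)) (lam * Im (\<phi> x))))"

definition stable_set :: "'a topology \<Rightarrow> ('a \<Rightarrow> 'a) \<Rightarrow> 'a \<Rightarrow> 'a set" where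
  "stable_set X g p = {x \<in> topspace X. \<exists>xs. xs 0 = x \<and> (\<forall>k. xs k \<in> topspace X \<and> g (xs k) = xs (Suc k))
       \<and> limitin X xs p sequentially}"

definition stable_curve :: "'a topology \<Rightarrow> ('a \<Rightarrow> 'a) \<Rightarrow> 'a \<Rightarrow> 'a set" where
  "stable_curve X g p = connected_component_of_set (subtopology X (stable_set X g p)) p"

definition unstable_curve :: "'a topology \<Rightarrow> ('a \<Rightarrow> 'a) \<Rightarrow> 'a \<Rightarrow> 'a set" where
  "unstable_curve X f p = stable_curve X (inv_into (topspace X) f) p"

definition arc_in :: "'a topology \<Rightarrow> 'a set \<Rightarrow> 'a \<Rightarrow> 'a \<Rightarrow> bool" where
  "arc_in X J a b \<longleftrightarrow> (\<exists>g. pathin X g \<and> inj_on g {0..1} \<and> g 0 = a \<and> g 1 = b \<and> J = g ` {0..1})"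

definition closed_2cell :: "'a topology \<Rightarrow> 'a set \<Rightarrow> 'a set \<Rightarrow> bool" where
  "closed_2cell X D B \<longleftrightarrow> D \<subseteq> topspace X \<and>
     (\<exists>h. homeomorphic_map (top_of_set (cball (0::complex) 1)) (subtopology X D) h \<and>
          h ` sphere 0 1 = B)"

definition V_n :: "('a \<Rightarrow> 'a) \<Rightarrow> 'a set \<Rightarrow> nat \<Rightarrow> 'a set" where
  "V_n f V n = {x \<in> V. \<forall>i\<in>{1..n-1}. (f ^^ i) x \<in> V}"

end

theory Submission
  imports Defs "HOL-Homology.Invariance_of_Domain"
begin

text \<open>Every point q of the interior V of the cell with f^n q = q has its whole f-orbit
  segment q, f q, ..., f^n q in V, and V is open (invariance of domain).  By continuity
  the same holds on a neighbourhood U of q, and on U the retraction r never acts,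
  since it fixes D pointwise.\<close>

lemma surface_invariance_of_domain:
  fixes S :: "complex set"
  assumes surf: "surface X" and S: "open S"
    and hcont: "continuous_map (top_of_set S) X h" and hinj: "inj_on h S"
  shows "openin X (h ` S)"
proof (subst openin_subopen, intro ballI)
  fix y assume "y \<in> h ` S"
  then obtain z where z: "z \<in> S" "y = h z" by blast
  then have "y \<in> topspace X" using hcont by (auto simp: continuous_map_def)
  then obtain \<phi> W where "hp_chart X \<phi> W" and yW: "y \<in> W"
    using surf unfolding surface_def by blast
  then have W: "openin X W"
    and \<phi>: "homeomorphic_map (subtopology X W) (top_of_set (\<phi> ` W)) \<phi>"
    unfolding hp_chart_def by auto
  have \<phi>inj: "inj_on \<phi> W"
    using homeomorphic_imp_injective_map[OF \<phi>] openin_subset[OF W] by (simp add: Int_absorb1)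
  have \<phi>cont: "continuous_map (subtopology X W) euclidean \<phi>"
    using homeomorphic_imp_continuous_map[OF \<phi>] continuous_map_into_fulltopology by blast
  define Om where "Om = {x \<in> S. h x \<in> W}"
  have "openin (top_of_set S) Om"
    using openin_continuous_map_preimage[OF hcont W] by (simp add: Om_def)
  then have Om: "open Om" using S openin_open_trans by blast
  have "continuous_map (top_of_set Om) (subtopology X W) h"
    using continuous_map_from_subtopology_mono[OF hcont, of Om]
    by (auto simp: Om_def continuous_map_in_subtopology)
  then have "continuous_on Om (\<phi> \<circ> h)"
    using continuous_map_compose \<phi>cont by fastforce
  moreover have "inj_on (\<phi> \<circ> h) Om"
    using hinj \<phi>inj by (auto simp: Om_def inj_on_def)
  ultimately have "open ((\<phi> \<circ> h) ` Om)"
    using invariance_of_domain Om by blast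
  then have "openin (subtopology X W) {x \<in> topspace (subtopology X W). \<phi> x \<in> (\<phi> \<circ> h) ` Om}"
    using openin_continuous_map_preimage[OF \<phi>cont] by auto
  moreover have "{x \<in> topspace (subtopology X W). \<phi> x \<in> (\<phi> \<circ> h) ` Om} = h ` Om"
    using hcont \<phi>inj by (auto simp: Om_def continuous_map_def inj_on_def)
  ultimately have "openin X (h ` Om)" using openin_trans_full W by metis
  moreover have "y \<in> h ` Om" using z yW by (auto simp: Om_def)
  ultimately show "\<exists>T. openin X T \<and> y \<in> T \<and> T \<subseteq> h ` S" by (auto simp: Om_def)
qed

lemma openin_closed_2cell_interior:
  assumes surf: "surface X" and cell: "closed_2cell X D B"
  shows "openin X (D - B)"
proof -
  obtain h where h: "homeomorphic_map (top_of_set (cball (0::complex) 1)) (subtopology X D) h"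
    and hB: "h ` sphere 0 1 = B" and DX: "D \<subseteq> topspace X"
    using cell unfolding closed_2cell_def by blast
  have hD: "h ` cball 0 1 = D"
    using homeomorphic_imp_surjective_map[OF h] DX by auto
  have hinj: "inj_on h (cball 0 1)"
    using homeomorphic_imp_injective_map[OF h] by simp
  have "D - B = h ` (cball 0 1 - sphere 0 1)"
    using hD hB hinj by (simp add: inj_on_image_set_diff)
  also have "\<dots> = h ` ball 0 1" by (metis cball_diff_sphere)
  finally have DB: "D - B = h ` ball 0 1" .
  have "continuous_map (top_of_set (cball 0 1)) X h"
    using homeomorphic_imp_continuous_map[OF h] continuous_map_into_fulltopology by blast
  then have "continuous_map (top_of_set (ball 0 1)) X h"
    by (rule continuous_map_from_subtopology_mono) auto
  then show ?thesis
    unfolding DB using hinj ball_subset_cball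
    by (intro surface_invariance_of_domain[OF surf]) (auto intro: inj_on_subset)
qed

lemma continuous_map_funpow:
  assumes "continuous_map X X f"
  shows "continuous_map X X (f ^^ n)"
proof (induction n)
  case 0
  show ?case by simp
next
  case (Suc n)
  then show ?case using continuous_map_compose[OF Suc assms] by (simp add: comp_def)
qed

lemma openin_funpow_stays_in:
  assumes "continuous_map X X f" and "openin X V"
  shows "openin X {x \<in> topspace X. \<forall>i\<le>n. (f ^^ i) x \<in> V}"
proof -
  have "{x \<in> topspace X. \<forall>i\<le>n. (f ^^ i) x \<in> V}
      = (\<Inter>i\<in>{..n}. {x \<in> topspace X. (f ^^ i) x \<in> V}) \<inter> topspace X"
    by auto
  also have "openin X \<dots>"
    using openin_continuous_map_preimage[OF continuous_map_funpow[OF assms(1)] assms(2)]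
    by (intro openin_INT) auto
  finally show ?thesis .
qed

lemma V_n_fixed_point_orbit:
  assumes "q \<in> V_n f V n" and "(f ^^ n) q = q" and "i \<le> n"
  shows "(f ^^ i) q \<in> V"
  using assms by (cases "i = 0 \<or> i = n") (auto simp: V_n_def)

lemma funpow_eq_funpow_retract_comp:
  fixes f r :: "'a \<Rightarrow> 'a"
  assumes "\<forall>x\<in>D. r x = x" and "\<And>i. 0 < i \<Longrightarrow> i \<le> n \<Longrightarrow> (f ^^ i) x \<in> D"
  shows "(f ^^ n) x = ((r \<circ> f) ^^ n) x"
  using assms(2)
proof (induction n)
  case 0
  show ?case by simp
next
  case (Suc n)
  have "(f ^^ n) x = ((r \<circ> f) ^^ n) x"
    by (rule Suc.IH) (use Suc.prems in auto)
  moreover have "r ((f ^^ Suc n) x) = (f ^^ Suc n) x"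
    using Suc.prems assms(1) by blast
  ultimately show ?case by (metis comp_apply funpow.simps(2))
qed

theorem lemma3p3:
  fixes X :: "'a topology" and A :: "(('a \<Rightarrow> complex) \<times> 'a set) set"
    and f r :: "'a \<Rightarrow> 'a" and p p' :: 'a and D Js Ju :: "'a set" and n :: nat
  assumes surf: "surface X" and conn: "connected_space X"
    and orient: "oriented_atlas X A"
    and homeo: "homeomorphic_map X X f"
    and fpres: "orient_pres_wrt X A f"
    and saddle: "direct_saddle X f p"
    and Js: "arc_in X Js p p'" "Js \<subseteq> stable_curve X f p"
    and Ju: "arc_in X Ju p p'" "Ju \<subseteq> unstable_curve X f p"
    and homocl: "p' \<in> (stable_curve X f p \<inter> unstable_curve X f p) - {p}"
    and simple: "Js \<inter> Ju = {p, p'}"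
    and cell: "closed_2cell X D (Js \<union> Ju)"
    and retr: "continuous_map (subtopology X (f ` D \<union> D)) (subtopology X D) r"
              "\<forall>x\<in>D. r x = x"
    and rJs: "r ` (f ` D - D) \<subseteq> Js"
    and n: "n \<ge> 1"
  shows "\<forall>q. (f ^^ n) q = q \<and> q \<in> V_n f (D - (Js \<union> Ju)) n \<longrightarrow>
           (\<exists>U. openin X U \<and> q \<in> U \<and> U \<subseteq> V_n f (D - (Js \<union> Ju)) n \<and>
                (\<forall>x\<in>U. (f ^^ n) x = ((r \<circ> f) ^^ n) x))"
proof (intro allI impI)
  fix q assume q: "(f ^^ n) q = q \<and> q \<in> V_n f (D - (Js \<union> Ju)) n"
  define V where "V = D - (Js \<union> Ju)"
  define U where "U = {x \<in> topspace X. \<forall>i\<le>n. (f ^^ i) x \<in> V}"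
  have "openin X V"
    unfolding V_def using surf cell by (rule openin_closed_2cell_interior)
  then have "openin X U"
    unfolding U_def using homeo openin_funpow_stays_in homeomorphic_imp_continuous_map by blast
  moreover have "q \<in> U"
    using q V_n_fixed_point_orbit[of q f V n] cell
    by (auto simp: U_def V_def closed_2cell_def V_n_def)
  moreover have "U \<subseteq> V_n f V n"
    by (auto simp: U_def V_n_def)
  moreover have "(f ^^ n) x = ((r \<circ> f) ^^ n) x" if "x \<in> U" for x
    using that retr(2) by (intro funpow_eq_funpow_retract_comp) (auto simp: U_def V_def)
  ultimately show "\<exists>U. openin X U \<and> q \<in> U \<and> U \<subseteq> V_n f (D - (Js \<union> Ju)) n \<and>
                (\<forall>x\<in>U. (f ^^ n) x = ((r \<circ> f) ^^ n) x)"
    unfolding V_def by blast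
qed

end
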